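(* Let $F$ be a field, $d\ge1$, and $x:\mathbb Z^2\to F$ such that $\det M^{(d+1)}_{j,k}=1$ and $\det M^{(d)}_{j,k}\neq0$ for all $j,k\in\mathbb Z$. Then there exist functions $c_1,\dots,c_d:\mathbb Z\to F$ such that for all $j,k\in\mathbb Z$, $$0=x_{j,k-d}+\sum_{i=1}^d(-1)^i\,c_i(j+k)\,x_{j+i,k+i-d}-(-1)^d\,x_{j+d+1,k+1}.$$ That is, the coefficients of this linear recursion depend only on $j+k$ and not on $j-k$.
   Context: For $m\ge1$, $M^{(m)}_{j,k}$ denotes the $m\times m$ matrix whose $(r,c)$ entry ($0\le r,c\le m-1$) is $x_{j-r+c,\;k-(m-1)+r+c}$. *)

theory Defs
  imports "Jordan_Normal_Form.Determinant"
begin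

definition Mjk :: "(int \<times> int \<Rightarrow> 'a) \<Rightarrow> nat \<Rightarrow> int \<Rightarrow> int \<Rightarrow> 'a mat" where
  "Mjk x m j k = mat m m (\<lambda>(r, c).
      x (j - int r + int c, k - (int m - 1) + int r + int c))"

end

theory Submission
  imports Defs
begin

(* Fix s = j + k.  For an integer t let row t be the vector
   (x (t + i, s - t - d + i))_{i = 0..d+1}, and let the window at t be the
   (d+1) x (d+2) matrix with rows t, t-1, ..., t-d.  Its leading and trailing
   (d+1)-minors are determinants of matrices M^(d+1), hence equal to 1, so by
   Cramer's rule the window has a kernel vector normalised to
   alpha_0 = 1, alpha_{d+1} = -(-1)^d.  The first d rows of the window at t+1 are
   the last d rows of the window at t, and their inner d-minor is a nonzero
   determinant of some M^(d); hence a normalised kernel vector is determined by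
   these d rows alone, and consecutive windows share the same normalised kernel
   vector.  By induction in both directions one vector alpha annihilates every
   row on the antidiagonal class s, and c_i(s) = (-1)^i alpha_i gives the claim. *)

lemma nonsingular_system_solvable:
  fixes B :: "'a::field mat"
  assumes B: "B \<in> carrier_mat n n" and dB: "det B \<noteq> 0" and v: "v \<in> carrier_vec n"
  obtains z where "z \<in> carrier_vec n" and "B *\<^sub>v z = v"
proof
  define z where "z = inverse (det B) \<cdot>\<^sub>v (adj_mat B *\<^sub>v v)"
  show "z \<in> carrier_vec n" using adj_mat(1)[OF B] v by (simp add: z_def)
  have "B *\<^sub>v z = inverse (det B) \<cdot>\<^sub>v ((B * adj_mat B) *\<^sub>v v)"
    using adj_mat(1)[OF B] B v by (simp add: z_def mult_mat_vec assoc_mult_mat_vec)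
  also have "(B * adj_mat B) *\<^sub>v v = det B \<cdot>\<^sub>v v"
    using adj_mat(2)[OF B] v
    by (intro eq_vecI) (auto simp: scalar_prod_def mult.assoc
        if_distrib[of "\<lambda>u. u * _"] if_distrib[of "\<lambda>u. _ * u"] cong: if_cong)
  finally show "B *\<^sub>v z = v" using dB by (simp add: smult_smult_assoc)
qed

lemma normalised_kernel_vector_exists:
  fixes N :: "nat \<Rightarrow> nat \<Rightarrow> 'a::field"
  assumes trailing: "det (mat (Suc m) (Suc m) (\<lambda>(r, c). N r (Suc c))) \<noteq> 0"
  shows "\<exists>\<alpha>. \<alpha> 0 = 1
     \<and> \<alpha> (Suc m) = - ((-1) ^ m * det (mat (Suc m) (Suc m) (\<lambda>(r, c). N r c))
                       / det (mat (Suc m) (Suc m) (\<lambda>(r, c). N r (Suc c))))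
     \<and> (\<forall>r < Suc m. (\<Sum>i < Suc (Suc m). \<alpha> i * N r i) = 0)"
proof -
  define A where "A = mat (Suc m) (Suc m) (\<lambda>(r, c). N r c)"
  define B where "B = mat (Suc m) (Suc m) (\<lambda>(r, c). N r (Suc c))"
  define v where "v = vec (Suc m) (\<lambda>r. N r 0)"
  have B: "B \<in> carrier_mat (Suc m) (Suc m)" by (simp add: B_def)
  have v: "v \<in> carrier_vec (Suc m)" by (simp add: v_def)
  obtain z where z: "z \<in> carrier_vec (Suc m)" and Bz: "B *\<^sub>v z = v"
    using nonsingular_system_solvable[OF B _ v] trailing by (auto simp: B_def)
  define \<alpha> where "\<alpha> = (\<lambda>i. if i = 0 then 1 else - z $ (i - 1))"
  have kernel: "(\<Sum>i < Suc (Suc m). \<alpha> i * N r i) = 0" if r: "r < Suc m" for r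
  proof -
    have "(\<Sum>i < Suc (Suc m). \<alpha> i * N r i) = N r 0 - (\<Sum>i < Suc m. N r (Suc i) * z $ i)"
      unfolding sum.lessThan_Suc_shift by (simp add: \<alpha>_def sum_negf mult.commute)
    also have "(\<Sum>i < Suc m. N r (Suc i) * z $ i) = (B *\<^sub>v z) $ r"
      using r z by (simp add: B_def mult_mat_vec_def scalar_prod_def atLeast0LessThan)
    finally show ?thesis using Bz r by (simp add: v_def)
  qed
  text \<open>Replacing the last column of B by v and moving it to the front gives A.\<close>
  have RC: "replace_col B v m \<in> carrier_mat (Suc m) (Suc m)"
    using B by (simp add: replace_col_def)
  have "swap_col_to_front (replace_col B v m) m = A"
    by (subst swap_col_to_front_result[OF RC], simp, rule eq_matI)
       (auto simp: replace_col_def A_def B_def v_def)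
  hence "det A = (-1) ^ m * (z $ m * det B)"
    using swap_col_to_front_det[OF RC, of m] cramer_lemma_mat[OF B z, of m] Bz by simp
  hence "z $ m = (-1) ^ m * det A / det B"
    using trailing by (simp add: B_def field_simps flip: mult.assoc)
  thus ?thesis using kernel by (intro exI[of _ \<alpha>]) (simp add: \<alpha>_def A_def B_def)
qed

lemma normalised_kernel_vector_unique:
  fixes N :: "nat \<Rightarrow> nat \<Rightarrow> 'a::field"
  assumes inner: "det (mat m m (\<lambda>(r, c). N r (Suc c))) \<noteq> 0"
    and first: "\<alpha> 0 = \<beta> 0" and last: "\<alpha> (Suc m) = \<beta> (Suc m)"
    and ker_\<alpha>: "\<forall>r < m. (\<Sum>i < Suc (Suc m). \<alpha> i * N r i) = 0"
    and ker_\<beta>: "\<forall>r < m. (\<Sum>i < Suc (Suc m). \<beta> i * N r i) = 0"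
  shows "\<forall>i < Suc (Suc m). \<alpha> i = \<beta> i"
proof -
  define C where "C = mat m m (\<lambda>(r, c). N r (Suc c))"
  define \<delta> where "\<delta> = vec m (\<lambda>c. \<alpha> (Suc c) - \<beta> (Suc c))"
  have C: "C \<in> carrier_mat m m" by (simp add: C_def)
  have \<delta>: "\<delta> \<in> carrier_vec m" by (simp add: \<delta>_def)
  have "C *\<^sub>v \<delta> = 0\<^sub>v m"
  proof (rule eq_vecI)
    fix r assume "r < dim_vec (0\<^sub>v m :: 'a vec)"
    hence r: "r < m" by simp
    have "(\<Sum>i < Suc (Suc m). (\<alpha> i - \<beta> i) * N r i) = 0"
      using ker_\<alpha> ker_\<beta> r by (simp add: left_diff_distrib sum_subtractf)
    hence "(\<Sum>i < m. N r (Suc i) * (\<alpha> (Suc i) - \<beta> (Suc i))) = 0"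
      using first last
      by (simp only: sum.lessThan_Suc_shift[of _ "Suc m"] sum.lessThan_Suc[of _ m])
         (simp add: mult.commute)
    thus "(C *\<^sub>v \<delta>) $ r = 0\<^sub>v m $ r"
      using r by (simp add: C_def \<delta>_def mult_mat_vec_def scalar_prod_def atLeast0LessThan)
  qed (simp add: C_def)
  hence "\<delta> = 0\<^sub>v m"
    using det_0_iff_vec_prod_zero_field[OF C] inner \<delta> unfolding C_def by blast
  have inner_eq: "\<alpha> (Suc c) = \<beta> (Suc c)" if "c < m" for c
  proof -
    have "\<delta> $ c = 0" using \<open>\<delta> = 0\<^sub>v m\<close> that by simp
    thus ?thesis using that by (simp add: \<delta>_def)
  qed
  show ?thesis
  proof (intro allI impI)
    fix i assume "i < Suc (Suc m)"
    then consider "i = 0" | c where "i = Suc c" "c < m" | "i = Suc m"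
      by (cases i) (auto simp: less_Suc_eq)
    thus "\<alpha> i = \<beta> i" using first last inner_eq by cases auto
  qed
qed

definition antidiag_row :: "(int \<times> int \<Rightarrow> 'a) \<Rightarrow> nat \<Rightarrow> int \<Rightarrow> int \<Rightarrow> nat \<Rightarrow> 'a" where
  "antidiag_row x d s t i = x (t + int i, s - t - int d + int i)"

definition window :: "(int \<times> int \<Rightarrow> 'a) \<Rightarrow> nat \<Rightarrow> int \<Rightarrow> int \<Rightarrow> nat \<Rightarrow> nat \<Rightarrow> 'a" where
  "window x d s t r i = antidiag_row x d s (t - int r) i"

lemma window_shift: "window x d s (t + 1) (Suc r) i = window x d s t r i"
  by (simp add: window_def)

lemma window_leading_minor:
  "mat (Suc d) (Suc d) (\<lambda>(r, c). window x d s t r c) = Mjk x (d + 1) t (s - t)"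
  by (rule eq_matI) (auto simp: window_def antidiag_row_def Mjk_def algebra_simps)

lemma window_trailing_minor:
  "mat (Suc d) (Suc d) (\<lambda>(r, c). window x d s t r (Suc c)) = Mjk x (d + 1) (t + 1) (s - t + 1)"
  by (rule eq_matI) (auto simp: window_def antidiag_row_def Mjk_def algebra_simps)

lemma window_inner_minor:
  "mat d d (\<lambda>(r, c). window x d s t r (Suc c)) = Mjk x d (t + 1) (s - t)"
  by (rule eq_matI) (auto simp: window_def antidiag_row_def Mjk_def algebra_simps)

text \<open>Normalised coefficient vectors: those with the end entries required by the
  recursion.  Window kernel vectors of this form exist since all M^(d+1) have
  determinant 1.\<close>

definition normalised :: "nat \<Rightarrow> (nat \<Rightarrow> 'a::comm_ring_1) \<Rightarrow> bool" where
  "normalised d \<alpha> \<longleftrightarrow> \<alpha> 0 = 1 \<and> \<alpha> (Suc d) = - ((-1) ^ d)"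

lemma window_kernel_exists:
  fixes x :: "int \<times> int \<Rightarrow> 'a::field"
  assumes "\<And>j k. det (Mjk x (d + 1) j k) = 1"
  shows "\<exists>\<alpha>. normalised d \<alpha>
           \<and> (\<forall>r < Suc d. (\<Sum>i < Suc (Suc d). \<alpha> i * window x d s t r i) = 0)"
  using normalised_kernel_vector_exists[of d "window x d s t"] assms
  by (simp add: normalised_def window_leading_minor window_trailing_minor)

text \<open>Consecutive windows have the same normalised kernel vector, since they
  share d rows whose inner minor is nonzero.\<close>

lemma consecutive_window_kernels_agree:
  fixes x :: "int \<times> int \<Rightarrow> 'a::field"
  assumes inner: "\<And>j k. det (Mjk x d j k) \<noteq> 0"
    and "normalised d \<alpha>" "normalised d \<beta>"
    and ker_\<alpha>: "\<forall>r < Suc d. (\<Sum>i < Suc (Suc d). \<alpha> i * window x d s t r i) = 0"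
    and ker_\<beta>: "\<forall>r < Suc d. (\<Sum>i < Suc (Suc d). \<beta> i * window x d s (t + 1) r i) = 0"
  shows "\<forall>i < Suc (Suc d). \<alpha> i = \<beta> i"
proof -
  have shared_\<alpha>: "\<forall>r < d. (\<Sum>i < Suc (Suc d). \<alpha> i * window x d s t r i) = 0"
    using ker_\<alpha> by simp
  have shared_\<beta>: "\<forall>r < d. (\<Sum>i < Suc (Suc d). \<beta> i * window x d s t r i) = 0"
  proof (intro allI impI)
    fix r assume "r < d"
    thus "(\<Sum>i < Suc (Suc d). \<beta> i * window x d s t r i) = 0"
      using ker_\<beta>[rule_format, of "Suc r"] by (simp add: window_shift)
  qed
  show ?thesis
    by (rule normalised_kernel_vector_unique[OF _ _ _ shared_\<alpha> shared_\<beta>])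
       (use assms in \<open>simp_all add: normalised_def window_inner_minor\<close>)
qed

lemma antidiagonal_recurrence:
  fixes x :: "int \<times> int \<Rightarrow> 'a::field"
  assumes outer: "\<And>j k. det (Mjk x (d + 1) j k) = 1"
    and inner: "\<And>j k. det (Mjk x d j k) \<noteq> 0"
  shows "\<exists>\<alpha>. normalised d \<alpha> \<and> (\<forall>t. (\<Sum>i < Suc (Suc d). \<alpha> i * antidiag_row x d s t i) = 0)"
proof -
  obtain \<beta> where norm: "\<And>t. normalised d (\<beta> t)"
    and ker: "\<And>t. \<forall>r < Suc d. (\<Sum>i < Suc (Suc d). \<beta> t i * window x d s t r i) = 0"
    using window_kernel_exists[OF outer, of s] by metis
  have step: "\<forall>i < Suc (Suc d). \<beta> t i = \<beta> (t + 1) i" for t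
    using consecutive_window_kernels_agree[OF inner norm norm ker ker] .
  have const: "\<forall>i < Suc (Suc d). \<beta> t i = \<beta> 0 i" for t
  proof (induction t rule: int_induct[of _ 0])
    case (step1 t) thus ?case using step[of t] by simp
  next
    case (step2 t) thus ?case using step[of "t - 1"] by simp
  qed simp
  have "(\<Sum>i < Suc (Suc d). \<beta> 0 i * antidiag_row x d s t i) = 0" for t
  proof -
    have "(\<Sum>i < Suc (Suc d). \<beta> 0 i * antidiag_row x d s t i)
        = (\<Sum>i < Suc (Suc d). \<beta> t i * window x d s t 0 i)"
      using const[of t] by (intro sum.cong) (simp_all add: window_def)
    thus ?thesis using ker[of t] by simp
  qed
  thus ?thesis using norm by blast
qed

lemma normalised_relation_signs:
  fixes \<alpha> y :: "nat \<Rightarrow> 'a::comm_ring_1"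
  assumes "normalised d \<alpha>"
  shows "(\<Sum>i < Suc (Suc d). \<alpha> i * y i)
       = y 0 + (\<Sum>i = 1..d. (-1) ^ i * ((-1) ^ i * \<alpha> i) * y i) - (-1) ^ d * y (Suc d)"
proof -
  have "{..<Suc (Suc d)} = insert 0 (insert (Suc d) {1..d})" by auto
  hence "(\<Sum>i < Suc (Suc d). \<alpha> i * y i) = \<alpha> 0 * y 0 + \<alpha> (Suc d) * y (Suc d) + (\<Sum>i = 1..d. \<alpha> i * y i)"
    by (simp add: add.assoc)
  also have "(\<Sum>i = 1..d. \<alpha> i * y i) = (\<Sum>i = 1..d. (-1) ^ i * ((-1) ^ i * \<alpha> i) * y i)"
    by (simp add: mult.assoc[symmetric])
  finally show ?thesis using assms by (simp add: normalised_def)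
qed

theorem mainTheorem6:
  fixes x :: "int \<times> int \<Rightarrow> 'a::field" and d :: nat
  assumes "d \<ge> 1"
    and "\<And>j k. det (Mjk x (d + 1) j k) = 1"
    and "\<And>j k. det (Mjk x d j k) \<noteq> 0"
  shows "\<exists>c :: nat \<Rightarrow> int \<Rightarrow> 'a. \<forall>j k.
     0 = x (j, k - int d)
         + (\<Sum>i = 1..d. (-1) ^ i * c i (j + k) * x (j + int i, k + int i - int d))
         - (-1) ^ d * x (j + int d + 1, k + 1)"
proof -
  obtain \<alpha> where norm: "\<And>s. normalised d (\<alpha> s)"
    and rec: "\<And>s t. (\<Sum>i < Suc (Suc d). \<alpha> s i * antidiag_row x d s t i) = 0"
    using antidiagonal_recurrence[OF assms(2,3)] by metis
  show ?thesis
  proof (intro exI[of _ "\<lambda>i s. (-1) ^ i * \<alpha> s i"] allI)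
    fix j k
    have "0 = (\<Sum>i < Suc (Suc d). \<alpha> (j + k) i * x (j + int i, k + int i - int d))"
      using rec[of "j + k" j] by (simp add: antidiag_row_def diff_add_eq)
    thus "0 = x (j, k - int d)
         + (\<Sum>i = 1..d. (-1) ^ i * ((-1) ^ i * \<alpha> (j + k) i) * x (j + int i, k + int i - int d))
         - (-1) ^ d * x (j + int d + 1, k + 1)"
      unfolding normalised_relation_signs[OF norm] by (simp add: ac_simps)
  qed
qed

end
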